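(* Let $0<a<m$ and consider, on the region $a<\rho<\sqrt{4m^2+a^2}$ of the plane (polar coordinates $(\rho,\varphi)$), the functions $$r=\sqrt{\rho^2-a^2},\qquad K=\frac{2m}{r},\qquad b_\rho=\frac{r}{\rho},\qquad b_\varphi=\frac{a}{\rho},$$ so that $b_\rho^2+b_\varphi^2=1$ and $K>1$ on this region (the ergoregion). The radial parts of the two families of zero-energy null geodesics (parametrized by $t$) are $$\frac{d\rho^+}{dt}=\frac{(Kb_\rho^2-1)\sqrt{K-1}}{-Kb_\rho\sqrt{K-1}-Kb_\varphi},\qquad \frac{d\rho^-}{dt}=\frac{-(Kb_\rho^2-1)\sqrt{K-1}}{Kb_\rho\sqrt{K-1}-Kb_\varphi}=-\frac{\sqrt{K-1}\,\bigl(Kb_\rho\sqrt{K-1}+Kb_\varphi\bigr)}{K^2},$$ (the second expression for $d\rho^-/dt$ being its continuous extension). Then: (i) the denominator of $d\rho^+/dt$ never vanishes on the region, and $d\rho^+/dt=0$ exactly on the two circles where $r=r_\pm:=m\pm\sqrt{m^2-a^2}$ (equivalently $Kb_\rho^2=1$); these two circles are invariant under the $(+)$ flow, i.e. the $(+)$ family produces two horizons; (ii) $d\rho^-/dt<0$ everywhere on the region, so $\rho^-(t)$ is strictly decreasing along every $(-)$ trajectory and the $(-)$ family produces no horizon.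
   Context: This is the $2+1$ reduction of the Kerr metric (Kerr–Schild form) to the equatorial plane $z=0$, $\xi_z=0$, with Hamiltonian $H=\tau^2-\xi_\rho^2-(\xi_\varphi/\rho)^2+K(-\tau+b_\rho\xi_\rho+b_\varphi\xi_\varphi/\rho)^2$. Zero-energy null geodesics are the null bicharacteristics of $H$ with $\tau=0$, reparametrized by the time $t$; on the characteristic set one has $\xi_\rho=\frac{-Kb_\rho b_\varphi\pm\sqrt{K-1}}{Kb_\rho^2-1}\,\xi_\varphi/\rho$, and the sign $\pm$ defines the $(\pm)$ family. A horizon produced by a family is a circle $\{\rho=\text{const}\}$ in the ergoregion that is a closed trajectory (limit cycle) of that family. *)

theory Defs
  imports "HOL-Analysis.Analysis"
begin

text \<open>Equatorial Kerr data in the ergoregion, as functions of the polar radius rho,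
 with parameters a (rotation) and m (mass).\<close>

definition ergo :: "real \<Rightarrow> real \<Rightarrow> real set" where
  "ergo a m = {a <..< sqrt (4 * m^2 + a^2)}"

definition rr :: "real \<Rightarrow> real \<Rightarrow> real" where
  "rr a rho = sqrt (rho^2 - a^2)"

definition KK :: "real \<Rightarrow> real \<Rightarrow> real \<Rightarrow> real" where
  "KK a m rho = 2 * m / rr a rho"

definition b_rho :: "real \<Rightarrow> real \<Rightarrow> real" where
  "b_rho a rho = rr a rho / rho"

definition b_phi :: "real \<Rightarrow> real \<Rightarrow> real" where
  "b_phi a rho = a / rho"

definition den_plus :: "real \<Rightarrow> real \<Rightarrow> real \<Rightarrow> real" where
  "den_plus a m rho = - KK a m rho * b_rho a rho * sqrt (KK a m rho - 1) - KK a m rho * b_phi a rho"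

definition drho_plus :: "real \<Rightarrow> real \<Rightarrow> real \<Rightarrow> real" where
  "drho_plus a m rho = (KK a m rho * (b_rho a rho)^2 - 1) * sqrt (KK a m rho - 1) / den_plus a m rho"

definition den_minus :: "real \<Rightarrow> real \<Rightarrow> real \<Rightarrow> real" where
  "den_minus a m rho = KK a m rho * b_rho a rho * sqrt (KK a m rho - 1) - KK a m rho * b_phi a rho"

definition drho_minus_quot :: "real \<Rightarrow> real \<Rightarrow> real \<Rightarrow> real" where
  "drho_minus_quot a m rho = - (KK a m rho * (b_rho a rho)^2 - 1) * sqrt (KK a m rho - 1) / den_minus a m rho"

definition drho_minus :: "real \<Rightarrow> real \<Rightarrow> real \<Rightarrow> real" where
  "drho_minus a m rho = - sqrt (KK a m rho - 1) *
     (KK a m rho * b_rho a rho * sqrt (KK a m rho - 1) + KK a m rho * b_phi a rho) / (KK a m rho)^2"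

definition r_plus :: "real \<Rightarrow> real \<Rightarrow> real" where
  "r_plus a m = m + sqrt (m^2 - a^2)"

definition r_minus :: "real \<Rightarrow> real \<Rightarrow> real" where
  "r_minus a m = m - sqrt (m^2 - a^2)"

end

theory Submission
  imports Defs
begin

text \<open>With \<open>r = sqrt (\<rho>\<^sup>2 - a\<^sup>2)\<close>, the ergoregion corresponds to \<open>0 < r < 2m\<close>, where
  \<open>K = 2m/r > 1\<close> and \<open>b\<^sub>\<rho>, b\<^sub>\<phi> > 0\<close>. Hence the denominator of \<open>d\<rho>\<^sup>+/dt\<close> is minus a
  sum of positive terms, and its numerator vanishes iff \<open>K b\<^sub>\<rho>\<^sup>2 = 2mr/(r\<^sup>2 + a\<^sup>2) = 1\<close>,
  i.e. at the roots \<open>r\<^sub>\<plusminus>\<close> of \<open>r\<^sup>2 - 2mr + a\<^sup>2\<close>. For the \<open>(-)\<close> family, \<open>b\<^sub>\<rho>\<^sup>2 + b\<^sub>\<phi>\<^sup>2 = 1\<close>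
  gives \<open>K b\<^sub>\<rho>\<^sup>2 - 1 = (b\<^sub>\<rho>\<surd>(K-1) - b\<^sub>\<phi>)(b\<^sub>\<rho>\<surd>(K-1) + b\<^sub>\<phi>)\<close>, which cancels the
  denominator and leaves \<open>-\<surd>(K-1)(K b\<^sub>\<rho>\<surd>(K-1) + K b\<^sub>\<phi>)/K\<^sup>2 < 0\<close>; by the mean value
  theorem every \<open>(-)\<close> trajectory is then strictly decreasing.\<close>

lemma has_real_derivative_neg_imp_decreasing_on_interval:
  fixes f f' :: "real \<Rightarrow> real"
  assumes I: "is_interval I"
    and der: "\<And>x. x \<in> I \<Longrightarrow> (f has_real_derivative f' x) (at x within I)"
    and neg: "\<And>x. x \<in> I \<Longrightarrow> f' x < 0"
    and st: "s \<in> I" "t \<in> I" "s < t"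
  shows "f t < f s"
proof -
  have sub: "{s..t} \<subseteq> I"
    using I st unfolding is_interval_1 by (meson atLeastAtMost_iff subsetI)
  have "\<exists>x\<in>{s<..<t}. f t - f s = (\<lambda>h. f' x * h) (t - s)"
  proof (rule mvt_simple[OF \<open>s < t\<close>])
    fix x assume "s \<le> x" "x \<le> t"
    then have "x \<in> I"
      using sub by auto
    then have "(f has_real_derivative f' x) (at x within {s..t})"
      using sub by (rule DERIV_subset[OF der])
    then show "(f has_derivative (\<lambda>h. f' x * h)) (at x within {s..t})"
      by (simp add: has_field_derivative_def)
  qed
  then obtain x where x: "x \<in> {s<..<t}" "f t - f s = f' x * (t - s)"
    by auto
  have "f' x < 0"
    using x(1) sub by (intro neg) auto
  then have "f' x * (t - s) < 0"
    using \<open>s < t\<close> by (simp add: mult_neg_pos)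
  with x(2) show ?thesis
    by linarith
qed

lemma rr_squared:
  assumes "a\<^sup>2 \<le> rho\<^sup>2"
  shows "(rr a rho)\<^sup>2 = rho\<^sup>2 - a\<^sup>2"
  using assms by (simp add: rr_def)

lemma ergo_rr_bounds:
  assumes "0 \<le> a" "0 \<le> m" and rho: "rho \<in> ergo a m"
  shows "0 < rho" "0 < rr a rho" "rr a rho < 2 * m"
proof -
  have bounds: "a < rho" "rho < sqrt (4 * m\<^sup>2 + a\<^sup>2)"
    using rho by (auto simp: ergo_def)
  then show "0 < rho"
    using assms by simp
  have "a\<^sup>2 < rho\<^sup>2"
    using bounds assms by (simp add: power_strict_mono)
  then show "0 < rr a rho"
    by (simp add: rr_def)
  have "sqrt (rho\<^sup>2) < sqrt (4 * m\<^sup>2 + a\<^sup>2)"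
    using bounds \<open>0 < rho\<close> by simp
  then have "rho\<^sup>2 < 4 * m\<^sup>2 + a\<^sup>2"
    by (simp only: real_sqrt_less_iff)
  then have "rho\<^sup>2 - a\<^sup>2 < (2 * m)\<^sup>2"
    by (simp add: power_mult_distrib)
  then show "rr a rho < 2 * m"
    unfolding rr_def using \<open>0 \<le> m\<close> by (intro real_less_lsqrt) auto
qed

lemma sqrt_in_ergo:
  assumes "0 < r" "r < 2 * m"
  shows "sqrt (r\<^sup>2 + a\<^sup>2) \<in> ergo a m" "rr a (sqrt (r\<^sup>2 + a\<^sup>2)) = r"
proof -
  have "a < sqrt (r\<^sup>2 + a\<^sup>2)"
    using assms by (intro real_less_rsqrt) simp
  moreover have "r\<^sup>2 < (2 * m)\<^sup>2"
    using assms by (intro power_strict_mono) auto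
  then have "sqrt (r\<^sup>2 + a\<^sup>2) < sqrt (4 * m\<^sup>2 + a\<^sup>2)"
    by (simp add: power_mult_distrib)
  ultimately show "sqrt (r\<^sup>2 + a\<^sup>2) \<in> ergo a m"
    by (simp add: ergo_def)
  show "rr a (sqrt (r\<^sup>2 + a\<^sup>2)) = r"
    using assms by (simp add: rr_def)
qed

lemma b_rho_sq_plus_b_phi_sq:
  assumes "rho \<noteq> 0" "a\<^sup>2 \<le> rho\<^sup>2"
  shows "(b_rho a rho)\<^sup>2 + (b_phi a rho)\<^sup>2 = 1"
  using assms by (simp add: b_rho_def b_phi_def rr_squared power_divide field_simps)

lemma ergo_b_rho_sq_plus_b_phi_sq:
  assumes "0 \<le> a" and rho: "rho \<in> ergo a m"
  shows "(b_rho a rho)\<^sup>2 + (b_phi a rho)\<^sup>2 = 1"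
proof -
  have "a < rho"
    using rho by (simp add: ergo_def)
  with assms show ?thesis
    by (intro b_rho_sq_plus_b_phi_sq) (auto intro: power_mono)
qed

lemma ergo_KK_b_pos:
  assumes "0 < a" "0 \<le> m" and rho: "rho \<in> ergo a m"
  shows "1 < KK a m rho" "0 < b_rho a rho" "0 < b_phi a rho"
  using ergo_rr_bounds[OF _ _ rho] assms by (simp_all add: KK_def b_rho_def b_phi_def)

lemma KK_b_rho_sq_eq_1_iff:
  assumes r: "0 < rr a rho"
  shows "KK a m rho * (b_rho a rho)\<^sup>2 = 1 \<longleftrightarrow> (rr a rho)\<^sup>2 - 2 * m * rr a rho + a\<^sup>2 = 0"
proof -
  define r where "r = rr a rho"
  have "a\<^sup>2 < rho\<^sup>2"
    using r by (simp add: rr_def)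
  then have rho_sq: "rho\<^sup>2 = r\<^sup>2 + a\<^sup>2"
    by (simp add: r_def rr_squared)
  have "KK a m rho * (b_rho a rho)\<^sup>2 = 2 * m * r / rho\<^sup>2"
    using r by (simp add: KK_def b_rho_def r_def[symmetric] power_divide power2_eq_square)
  also have "\<dots> = 2 * m * r / (r\<^sup>2 + a\<^sup>2)"
    by (simp only: rho_sq)
  finally show ?thesis
    using r \<open>a\<^sup>2 < rho\<^sup>2\<close> rho_sq by (auto simp: r_def[symmetric] divide_eq_1_iff)
qed

lemma quadratic_eq_0_iff_r_plus_r_minus:
  fixes a m r :: real
  assumes "a\<^sup>2 \<le> m\<^sup>2"
  shows "r\<^sup>2 - 2 * m * r + a\<^sup>2 = 0 \<longleftrightarrow> r = r_plus a m \<or> r = r_minus a m"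
proof -
  define s where "s = sqrt (m\<^sup>2 - a\<^sup>2)"
  have "s\<^sup>2 = m\<^sup>2 - a\<^sup>2"
    using assms by (simp add: s_def)
  then have "r\<^sup>2 - 2 * m * r + a\<^sup>2 = (r - (m + s)) * (r - (m - s))"
    by (simp add: algebra_simps power2_eq_square)
  then show ?thesis
    by (simp add: r_plus_def r_minus_def s_def[symmetric])
qed

lemma r_minus_r_plus_bounds:
  assumes "0 < a" "a < m"
  shows "0 < r_minus a m" "r_minus a m < r_plus a m" "r_plus a m < 2 * m"
proof -
  have "a\<^sup>2 < m\<^sup>2"
    using assms by (intro power_strict_mono) auto
  then have "0 < sqrt (m\<^sup>2 - a\<^sup>2)" "sqrt (m\<^sup>2 - a\<^sup>2) < m"
    using assms by (auto intro: real_less_lsqrt)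
  then show "0 < r_minus a m" "r_minus a m < r_plus a m" "r_plus a m < 2 * m"
    by (auto simp: r_plus_def r_minus_def)
qed

lemma ergo_KK_b_sum_pos:
  assumes "0 < a" "0 \<le> m" "rho \<in> ergo a m"
  shows "0 < KK a m rho * b_rho a rho * sqrt (KK a m rho - 1) + KK a m rho * b_phi a rho"
  using ergo_KK_b_pos[OF assms] by (simp add: add_pos_pos)

lemma den_plus_neg:
  assumes "0 < a" "0 \<le> m" "rho \<in> ergo a m"
  shows "den_plus a m rho < 0"
  using ergo_KK_b_sum_pos[OF assms] by (simp add: den_plus_def)

lemma drho_plus_eq_0_iff:
  assumes "0 < a" "0 \<le> m" "rho \<in> ergo a m"
  shows "drho_plus a m rho = 0 \<longleftrightarrow> KK a m rho * (b_rho a rho)\<^sup>2 = 1"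
  using den_plus_neg[OF assms] ergo_KK_b_pos[OF assms] by (simp add: drho_plus_def)

lemma drho_minus_neg:
  assumes "0 < a" "0 \<le> m" "rho \<in> ergo a m"
  shows "drho_minus a m rho < 0"
  using ergo_KK_b_sum_pos[OF assms] ergo_KK_b_pos[OF assms]
  by (simp add: drho_minus_def divide_neg_pos)

lemma difference_of_squares_factor:
  fixes K B P S :: "'a :: comm_ring_1"
  assumes "B\<^sup>2 + P\<^sup>2 = 1" "S\<^sup>2 = K - 1"
  shows "K * B\<^sup>2 - 1 = (B * S - P) * (B * S + P)"
proof -
  have "(B * S - P) * (B * S + P) = B\<^sup>2 * S\<^sup>2 - P\<^sup>2"
    by (simp add: algebra_simps power2_eq_square)
  also have "\<dots> = K * B\<^sup>2 - (B\<^sup>2 + P\<^sup>2)"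
    unfolding assms(2) by (simp add: algebra_simps)
  finally show ?thesis
    using assms(1) by simp
qed

lemma removable_quotient_eq:
  fixes K B P S :: "'a :: field"
  assumes "B\<^sup>2 + P\<^sup>2 = 1" "S\<^sup>2 = K - 1" "K \<noteq> 0" "K * B * S - K * P \<noteq> 0"
  shows "- (K * B\<^sup>2 - 1) * S / (K * B * S - K * P) = - S * (K * B * S + K * P) / K\<^sup>2"
proof -
  have "B * S - P \<noteq> 0"
    using assms(4) by (metis mult.assoc right_diff_distrib mult_zero_right)
  have "- (K * B\<^sup>2 - 1) * S / (K * B * S - K * P)
      = - ((B * S - P) * ((B * S + P) * S)) / (K * (B * S - P))"
    by (simp add: difference_of_squares_factor[OF assms(1,2)] algebra_simps)
  also have "\<dots> = - ((B * S + P) * S) / K"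
    using \<open>B * S - P \<noteq> 0\<close> assms(3) by (simp add: field_simps)
  also have "\<dots> = - S * (K * B * S + K * P) / K\<^sup>2"
    using assms(3) by (simp add: field_simps power2_eq_square)
  finally show ?thesis .
qed

lemma drho_minus_quot_eq_drho_minus:
  assumes "0 < a" "0 \<le> m" and rho: "rho \<in> ergo a m" and den: "den_minus a m rho \<noteq> 0"
  shows "drho_minus_quot a m rho = drho_minus a m rho"
proof -
  have "(b_rho a rho)\<^sup>2 + (b_phi a rho)\<^sup>2 = 1"
    using ergo_b_rho_sq_plus_b_phi_sq[OF less_imp_le[OF assms(1)] rho] .
  moreover have "(sqrt (KK a m rho - 1))\<^sup>2 = KK a m rho - 1" "KK a m rho \<noteq> 0"
    using ergo_KK_b_pos[OF assms(1-3)] by auto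
  ultimately show ?thesis
    using den unfolding drho_minus_quot_def drho_minus_def den_minus_def
    by (rule removable_quotient_eq)
qed

lemma has_real_derivative_const_iff:
  "((\<lambda>_::real. c) has_real_derivative D) (at t) \<longleftrightarrow> D = 0"
  using DERIV_unique[OF _ DERIV_const] by auto

lemma drho_plus_eq_0_iff_rr:
  assumes "0 < a" "a \<le> m" and rho: "rho \<in> ergo a m"
  shows "drho_plus a m rho = 0 \<longleftrightarrow> rr a rho = r_plus a m \<or> rr a rho = r_minus a m"
proof -
  have "0 \<le> m" "a\<^sup>2 \<le> m\<^sup>2"
    using assms by (auto intro: power_mono)
  then show ?thesis
    using drho_plus_eq_0_iff[OF \<open>0 < a\<close> \<open>0 \<le> m\<close> rho] ergo_rr_bounds(2)[OF _ \<open>0 \<le> m\<close> rho]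
      KK_b_rho_sq_eq_1_iff quadratic_eq_0_iff_r_plus_r_minus \<open>0 < a\<close> by simp
qed

lemma drho_minus_trajectory_decreasing:
  fixes f :: "real \<Rightarrow> real"
  assumes "0 < a" "0 \<le> m" "is_interval I"
    and in_ergo: "\<And>t. t \<in> I \<Longrightarrow> f t \<in> ergo a m"
    and "\<And>t. t \<in> I \<Longrightarrow> (f has_real_derivative drho_minus a m (f t)) (at t within I)"
    and "s \<in> I" "t \<in> I" "s < t"
  shows "f t < f s"
  using assms drho_minus_neg[OF assms(1,2) in_ergo]
  by (intro has_real_derivative_neg_imp_decreasing_on_interval[of I f "\<lambda>t. drho_minus a m (f t)"])

theorem theorem3p1:
  fixes a m :: real
  assumes "0 < a" and "a < m"
  shows
    \<comment> \<open>ergoregion facts\<close>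
    "(\<forall>rho \<in> ergo a m. (b_rho a rho)^2 + (b_phi a rho)^2 = 1 \<and> KK a m rho > 1)
     \<comment> \<open>(i) denominator never vanishes; zero set of d rho^+/dt\<close>
     \<and> (\<forall>rho \<in> ergo a m. den_plus a m rho \<noteq> 0)
     \<and> (\<forall>rho \<in> ergo a m. drho_plus a m rho = 0 \<longleftrightarrow>
            (rr a rho = r_plus a m \<or> rr a rho = r_minus a m))
     \<and> (\<forall>rho \<in> ergo a m. drho_plus a m rho = 0 \<longleftrightarrow> KK a m rho * (b_rho a rho)^2 = 1)
     \<comment> \<open>(i) two distinct circles in the ergoregion, invariant under the (+) flow\<close>
     \<and> (\<exists>rho1 \<in> ergo a m. \<exists>rho2 \<in> ergo a m. rho1 \<noteq> rho2 \<and>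
            rr a rho1 = r_plus a m \<and> rr a rho2 = r_minus a m \<and>
            (\<forall>t. ((\<lambda>s::real. rho1) has_real_derivative drho_plus a m rho1) (at t)) \<and>
            (\<forall>t. ((\<lambda>s::real. rho2) has_real_derivative drho_plus a m rho2) (at t)))
     \<comment> \<open>(ii) continuous extension and strict negativity of d rho^-/dt\<close>
     \<and> (\<forall>rho \<in> ergo a m. den_minus a m rho \<noteq> 0 \<longrightarrow>
            drho_minus_quot a m rho = drho_minus a m rho)
     \<and> (\<forall>rho \<in> ergo a m. drho_minus a m rho < 0)
     \<and> (\<forall>(f :: real \<Rightarrow> real) (I :: real set). is_interval I \<longrightarrow>
            (\<forall>t \<in> I. f t \<in> ergo a m \<and>
               (f has_real_derivative drho_minus a m (f t)) (at t within I)) \<longrightarrow>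
            (\<forall>s \<in> I. \<forall>t \<in> I. s < t \<longrightarrow> f t < f s))
     \<comment> \<open>(ii) no horizon: no circle in the ergoregion is a stationary (closed) (-) trajectory\<close>
     \<and> \<not> (\<exists>rho \<in> ergo a m. \<forall>t. ((\<lambda>s::real. rho) has_real_derivative drho_minus a m rho) (at t))"
proof -
  have "0 \<le> m" "a \<le> m"
    using assms by simp_all
  obtain rho1 rho2 where circles: "rho1 \<in> ergo a m" "rr a rho1 = r_plus a m"
    "rho2 \<in> ergo a m" "rr a rho2 = r_minus a m"
    using sqrt_in_ergo r_minus_r_plus_bounds[OF assms] by (meson order.strict_trans)
  have horizons_plus: "\<exists>rho1 \<in> ergo a m. \<exists>rho2 \<in> ergo a m. rho1 \<noteq> rho2 \<and>
      rr a rho1 = r_plus a m \<and> rr a rho2 = r_minus a m \<and>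
      (\<forall>t. ((\<lambda>s::real. rho1) has_real_derivative drho_plus a m rho1) (at t)) \<and>
      (\<forall>t. ((\<lambda>s::real. rho2) has_real_derivative drho_plus a m rho2) (at t))"
  proof (intro bexI conjI allI)
    show "rho1 \<noteq> rho2"
      using circles r_minus_r_plus_bounds[OF assms] by auto
  qed (use circles drho_plus_eq_0_iff_rr[OF assms(1) \<open>a \<le> m\<close>] in
      \<open>auto simp: has_real_derivative_const_iff\<close>)
  have no_horizon_minus:
    "\<not> (\<exists>rho \<in> ergo a m. \<forall>t. ((\<lambda>s::real. rho) has_real_derivative drho_minus a m rho) (at t))"
    using drho_minus_neg[OF assms(1) \<open>0 \<le> m\<close>] by (fastforce simp: has_real_derivative_const_iff)
  show ?thesis
    by (intro conjI ballI allI impI)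
      (rule ergo_b_rho_sq_plus_b_phi_sq[OF less_imp_le[OF assms(1)]]
        ergo_KK_b_pos(1)[OF assms(1) \<open>0 \<le> m\<close>] less_imp_neq[OF den_plus_neg[OF assms(1) \<open>0 \<le> m\<close>]]
        drho_plus_eq_0_iff_rr[OF assms(1) \<open>a \<le> m\<close>]
        drho_plus_eq_0_iff[OF assms(1) \<open>0 \<le> m\<close>] horizons_plus
        drho_minus_quot_eq_drho_minus[OF assms(1) \<open>0 \<le> m\<close>] drho_minus_neg[OF assms(1) \<open>0 \<le> m\<close>]
        no_horizon_minus drho_minus_trajectory_decreasing[OF assms(1) \<open>0 \<le> m\<close>]; blast)+
qed

end
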